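(* Fix numbers $\alpha,\beta,\hat\alpha,\hat\beta>0$, and suppose it is not the case that both $\hat\beta\ge\beta$ and $\frac{\alpha}{\beta}\ge\frac{\hat\alpha}{\hat\beta}$. Then there exist a state-independent utility function $u\colon\mathbb{R}\to\mathbb{R}$ that is strictly increasing and weakly concave, a belief $\mu\in[0,1]$, and a nondegenerate interval $[\underline w,\overline w]\subset\mathbb{R}$ such that for every $w\in[\underline w,\overline w]$, $$\mu u(w+\hat\alpha)+(1-\mu)u(w-\hat\beta)\ >\ u(w)\ \ge\ \mu u(w+\alpha)+(1-\mu)u(w-\beta),$$ i.e. $\hat r\succ s\succeq r$ at every wealth in $[\underline w,\overline w]$.
   Context: Setting: two states $\{0,1\}$, belief $\mu=\mathbb{P}(\text{state }1)$. At wealth $w$, the safe action $s$ pays $0$ in both states; the risky action $r$ pays $\alpha$ in state $1$ and $-\beta$ in state $0$; the risky action $\hat r$ pays $\hat\alpha$ in state $1$ and $-\hat\beta$ in state $0$. A subjective expected utility maximizer with utility $u$ of terminal wealth ranks actions by expected utility of $w$ plus the payoff; $\succ$ denotes strict and $\succeq$ weak preference. *)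

theory Defs
  imports "HOL-Analysis.Analysis"
begin

end

theory Submission
  imports Defs
begin

text \<open>Write \<open>\<hat>r\<close> for the bet paying \<open>\<alpha>'\<close> or \<open>-\<beta>'\<close>. If \<open>r\<close> offers worse odds than
  \<open>\<hat>r\<close> (\<open>\<alpha>/\<beta> < \<alpha>'/\<beta>'\<close>), a risk-neutral agent whose belief makes \<open>r\<close> actuarially fair
  is indifferent to \<open>r\<close> and strictly prefers \<open>\<hat>r\<close>.
  Otherwise \<open>\<beta>' < \<beta>\<close>: take a utility with a single kink at \<open>0\<close>, slope \<open>1\<close> above and a
  steep slope \<open>K\<close> below, and wealth just above \<open>\<beta>'\<close>. Then every outcome of \<open>\<hat>r\<close> lies in
  the linear region, where \<open>\<hat>r\<close> is favourable under a belief with odds beyond \<open>\<beta>'/\<alpha>'\<close>,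
  while the loss of \<open>r\<close> falls below the kink, and a large \<open>K\<close> outweighs its gain.\<close>

definition bet_eu :: "(real \<Rightarrow> real) \<Rightarrow> real \<Rightarrow> real \<Rightarrow> real \<Rightarrow> real \<Rightarrow> real" where
  "bet_eu u \<mu> a b w = \<mu> * u (w + a) + (1 - \<mu>) * u (w - b)"

lemma bet_eu_ident: "bet_eu (\<lambda>x. x) \<mu> a b w = w + (\<mu> * a - (1 - \<mu>) * b)"
  by (simp add: bet_eu_def algebra_simps)

lemma concave_on_min:
  assumes "concave_on S f" "concave_on S g"
  shows "concave_on S (\<lambda>x. min (f x) (g x))"
  unfolding concave_on_iff
proof (intro conjI ballI allI impI)
  show "convex S" using assms(1) by (rule concave_on_imp_convex)
  fix x y and u v :: real assume xy: "x \<in> S" "y \<in> S" and uv: "u \<ge> 0" "v \<ge> 0" "u + v = 1"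
  have "u * min (f x) (g x) + v * min (f y) (g y) \<le> u * f x + v * f y"
    using uv by (intro add_mono mult_left_mono) auto
  also have "\<dots> \<le> f (u *\<^sub>R x + v *\<^sub>R y)"
    using assms(1) xy uv by (simp add: concave_on_iff)
  finally have "u * min (f x) (g x) + v * min (f y) (g y) \<le> f (u *\<^sub>R x + v *\<^sub>R y)" .
  moreover have "u * min (f x) (g x) + v * min (f y) (g y) \<le> u * g x + v * g y"
    using uv by (intro add_mono mult_left_mono) auto
  moreover have "\<dots> \<le> g (u *\<^sub>R x + v *\<^sub>R y)"
    using assms(2) xy uv by (simp add: concave_on_iff)
  ultimately show "u * min (f x) (g x) + v * min (f y) (g y)
      \<le> min (f (u *\<^sub>R x + v *\<^sub>R y)) (g (u *\<^sub>R x + v *\<^sub>R y))"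
    by linarith
qed

definition kinked :: "real \<Rightarrow> real \<Rightarrow> real" where
  "kinked K x = min x (K * x)"

lemma concave_on_kinked: "K \<ge> 0 \<Longrightarrow> concave_on UNIV (kinked K)"
  unfolding kinked_def
  by (intro concave_on_min concave_on_cmul) (simp_all add: concave_on_ident)

lemma strict_mono_kinked:
  assumes "K > 0"
  shows "strict_mono (kinked K)"
proof (rule strict_monoI)
  fix x y :: real assume "x < y"
  moreover from this have "K * x < K * y" using assms by simp
  ultimately show "kinked K x < kinked K y" by (auto simp: kinked_def min_def)
qed

lemma kinked_nonneg: "K \<ge> 1 \<Longrightarrow> x \<ge> 0 \<Longrightarrow> kinked K x = x"
  unfolding kinked_def using mult_right_mono[of 1 K x] by simp

lemma kinked_nonpos: "K \<ge> 1 \<Longrightarrow> x \<le> 0 \<Longrightarrow> kinked K x = K * x"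
  unfolding kinked_def using mult_right_mono_neg[of 1 K x] by simp

lemma bet_eu_kinked_accepts:
  assumes "K \<ge> 1" "a \<ge> 0" "0 \<le> b" "b \<le> w" "(1 - \<mu>) * b < \<mu> * a"
  shows "kinked K w < bet_eu (kinked K) \<mu> a b w"
  using assms by (simp add: bet_eu_def kinked_nonneg algebra_simps)

lemma bet_eu_kinked_rejects:
  assumes K: "K \<ge> 1" and \<mu>: "0 \<le> \<mu>" "\<mu> \<le> 1" and "a \<ge> 0" "b \<ge> 0" "0 \<le> w" "w \<le> b"
    and steep: "\<mu> * a \<le> (1 - \<mu>) * (K - 1) * (b - w)"
  shows "bet_eu (kinked K) \<mu> a b w \<le> kinked K w"
proof -
  have "bet_eu (kinked K) \<mu> a b w = w + \<mu> * a - (1 - \<mu>) * b - (1 - \<mu>) * (K - 1) * (b - w)"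
    using assms by (simp add: bet_eu_def kinked_nonneg kinked_nonpos algebra_simps)
  also have "\<dots> \<le> w - (1 - \<mu>) * b"
    using steep by simp
  also have "\<dots> \<le> w"
    using \<mu> \<open>b \<ge> 0\<close> by simp
  finally show ?thesis
    using K \<open>0 \<le> w\<close> by (simp add: kinked_nonneg)
qed

lemma risk_neutral_prefers_better_odds:
  assumes "\<alpha> > 0" "\<beta> > 0" "\<alpha> * \<beta>' < \<alpha>' * \<beta>"
  obtains \<mu> where "\<mu> \<in> {0..1}" "\<And>w. bet_eu (\<lambda>x. x) \<mu> \<alpha> \<beta> w = w"
    "\<And>w. w < bet_eu (\<lambda>x. x) \<mu> \<alpha>' \<beta>' w"
proof
  define \<mu> where "\<mu> = \<beta> / (\<alpha> + \<beta>)"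
  have one_minus: "1 - \<mu> = \<alpha> / (\<alpha> + \<beta>)"
    using assms by (simp add: \<mu>_def field_simps)
  show "\<mu> \<in> {0..1}"
    using assms by (simp add: \<mu>_def)
  have "\<mu> * \<alpha> - (1 - \<mu>) * \<beta> = 0"
    unfolding one_minus by (simp add: \<mu>_def)
  then show "bet_eu (\<lambda>x. x) \<mu> \<alpha> \<beta> w = w" for w
    by (simp add: bet_eu_ident)
  have "\<mu> * \<alpha>' - (1 - \<mu>) * \<beta>' = (\<alpha>' * \<beta> - \<alpha> * \<beta>') / (\<alpha> + \<beta>)"
    unfolding one_minus by (simp add: \<mu>_def diff_divide_distrib algebra_simps)
  also have "\<dots> > 0"
    using assms by simp
  finally show "w < bet_eu (\<lambda>x. x) \<mu> \<alpha>' \<beta>' w" for w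
    by (simp add: bet_eu_ident)
qed

lemma kinked_prefers_smaller_loss:
  assumes "\<alpha> \<ge> 0" "\<alpha>' > 0" "\<beta>' > 0" and smaller_loss: "\<beta>' < \<beta>"
  obtains K \<mu> wh where "K \<ge> 1" "\<mu> \<in> {0..1}" "\<beta>' < wh"
    "\<And>w. w \<in> {\<beta>'..wh} \<Longrightarrow> kinked K w < bet_eu (kinked K) \<mu> \<alpha>' \<beta>' w"
    "\<And>w. w \<in> {\<beta>'..wh} \<Longrightarrow> bet_eu (kinked K) \<mu> \<alpha> \<beta> w \<le> kinked K w"
proof
  define \<mu> where "\<mu> = 2 * \<beta>' / (\<alpha>' + 2 * \<beta>')"
  define wh where "wh = (\<beta>' + \<beta>) / 2"
  define K where "K = 1 + \<mu> * \<alpha> / ((1 - \<mu>) * (\<beta> - wh))"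
  have one_minus: "1 - \<mu> = \<alpha>' / (\<alpha>' + 2 * \<beta>')"
    using assms by (simp add: \<mu>_def field_simps)
  have \<mu>: "0 \<le> \<mu>" "\<mu> < 1"
    using assms by (simp_all add: \<mu>_def)
  then show "\<mu> \<in> {0..1}" by simp
  show "\<beta>' < wh"
    using smaller_loss by (simp add: wh_def)
  have wh: "wh < \<beta>"
    using smaller_loss by (simp add: wh_def)
  show K: "K \<ge> 1"
    using assms \<mu> wh by (simp add: K_def)
  \<comment> \<open>the odds \<open>\<mu> / (1 - \<mu>)\<close> are twice the odds \<open>\<beta>' / \<alpha>'\<close> that make \<open>\<hat>r\<close> fair\<close>
  have "(1 - \<mu>) * \<beta>' < \<mu> * \<alpha>'"
    unfolding one_minus using assms by (simp add: \<mu>_def divide_strict_right_mono)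
  then show "kinked K w < bet_eu (kinked K) \<mu> \<alpha>' \<beta>' w" if "w \<in> {\<beta>'..wh}" for w
    using that assms K by (intro bet_eu_kinked_accepts) auto
  have steep_at_wh: "\<mu> * \<alpha> = (1 - \<mu>) * (K - 1) * (\<beta> - wh)"
    using \<mu> wh by (simp add: K_def)
  show "bet_eu (kinked K) \<mu> \<alpha> \<beta> w \<le> kinked K w" if w: "w \<in> {\<beta>'..wh}" for w
  proof (rule bet_eu_kinked_rejects)
    have "(1 - \<mu>) * (K - 1) * (\<beta> - wh) \<le> (1 - \<mu>) * (K - 1) * (\<beta> - w)"
      using w \<mu> K by (intro mult_left_mono) auto
    then show "\<mu> * \<alpha> \<le> (1 - \<mu>) * (K - 1) * (\<beta> - w)"
      by (simp add: steep_at_wh)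
  qed (use w wh \<mu> K assms in auto)
qed

theorem mainTheorem2:
  fixes \<alpha> \<beta> \<alpha>' \<beta>' :: real
  assumes "\<alpha> > 0" "\<beta> > 0" "\<alpha>' > 0" "\<beta>' > 0"
    and "\<not> (\<beta>' \<ge> \<beta> \<and> \<alpha> / \<beta> \<ge> \<alpha>' / \<beta>')"
  shows "\<exists>(u :: real \<Rightarrow> real) (\<mu> :: real) (wl :: real) (wh :: real).
           strict_mono u \<and> concave_on UNIV u \<and> \<mu> \<in> {0..1} \<and> wl < wh \<and>
           (\<forall>w \<in> {wl..wh}.
              \<mu> * u (w + \<alpha>') + (1 - \<mu>) * u (w - \<beta>') > u w \<and>
              u w \<ge> \<mu> * u (w + \<alpha>) + (1 - \<mu>) * u (w - \<beta>))"
proof (cases "\<alpha> / \<beta> < \<alpha>' / \<beta>'")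
  case True
  then have "\<alpha> * \<beta>' < \<alpha>' * \<beta>"
    using assms by (simp add: field_simps)
  then obtain \<mu> where "\<mu> \<in> {0..1}" "\<And>w. bet_eu (\<lambda>x. x) \<mu> \<alpha> \<beta> w = w"
    "\<And>w. w < bet_eu (\<lambda>x. x) \<mu> \<alpha>' \<beta>' w"
    using risk_neutral_prefers_better_odds assms by blast
  then show ?thesis
    by (intro exI[of _ "\<lambda>x. x"] exI[of _ \<mu>] exI[of _ 0] exI[of _ 1])
      (auto simp: bet_eu_def strict_mono_def concave_on_ident)
next
  case False
  then have "\<beta>' < \<beta>"
    using assms(5) by linarith
  then obtain K \<mu> wh where "K \<ge> 1" "\<mu> \<in> {0..1}" "\<beta>' < wh"
    "\<And>w. w \<in> {\<beta>'..wh} \<Longrightarrow> kinked K w < bet_eu (kinked K) \<mu> \<alpha>' \<beta>' w"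
    "\<And>w. w \<in> {\<beta>'..wh} \<Longrightarrow> bet_eu (kinked K) \<mu> \<alpha> \<beta> w \<le> kinked K w"
    using kinked_prefers_smaller_loss assms by (metis less_imp_le)
  then show ?thesis
    using strict_mono_kinked[of K] concave_on_kinked[of K]
    by (intro exI[of _ "kinked K"] exI[of _ \<mu>] exI[of _ \<beta>'] exI[of _ wh]) (simp add: bet_eu_def)
qed

end
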